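(* Let $\kappa$ be an uncountable cardinal and let $X$ be either the Cantor cube $\{0,1\}^\kappa$ or the Tychonoff cube $[0,1]^\kappa$ (product topology). Then $X$ is reconstructible. Moreover, for every $x \in X$ the card $X \setminus \{x\}$ is not compact, not paracompact, not Lindel\"of and not normal.
   Context: For a topological space $X$ and $x \in X$, the set $X\setminus\{x\}$ carries the subspace topology. A card of $X$ is a space homeomorphic to $X \setminus \{x\}$ for some $x \in X$. The deck of $X$ is $\mathcal{D}(X)=\{[X\setminus\{x\}]_\sim : x \in X\}$, where $[Y]_\sim$ denotes the homeomorphism class of $Y$. A space $Z$ is a reconstruction of $X$ if $\mathcal{D}(Z)=\mathcal{D}(X)$. A space $X$ is reconstructible if every reconstruction of $X$ is homeomorphic to $X$. *)

theory Defs
  imports "HOL-Analysis.Analysis"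
begin

definition deleted_card :: "'a topology \<Rightarrow> 'a \<Rightarrow> 'a topology" where
  "deleted_card X x = subtopology X (topspace X - {x})"

text \<open>Equality of decks: the sets of homeomorphism classes of cards coincide.\<close>
definition same_deck :: "'a topology \<Rightarrow> 'b topology \<Rightarrow> bool" where
  "same_deck X Z \<longleftrightarrow>
     (\<forall>x\<in>topspace X. \<exists>z\<in>topspace Z. deleted_card X x homeomorphic_space deleted_card Z z) \<and>
     (\<forall>z\<in>topspace Z. \<exists>x\<in>topspace X. deleted_card Z z homeomorphic_space deleted_card X x)"

definition is_reconstruction :: "'b topology \<Rightarrow> 'a topology \<Rightarrow> bool" where
  "is_reconstruction Z X \<longleftrightarrow> same_deck Z X"

definition paracompact_space :: "'a topology \<Rightarrow> bool" where
  "paracompact_space X \<longleftrightarrow>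
     (\<forall>\<U>. (\<forall>U\<in>\<U>. openin X U) \<and> topspace X \<subseteq> \<Union>\<U> \<longrightarrow>
        (\<exists>\<V>. (\<forall>V\<in>\<V>. openin X V) \<and> topspace X \<subseteq> \<Union>\<V> \<and>
              (\<forall>V\<in>\<V>. \<exists>U\<in>\<U>. V \<subseteq> U) \<and> locally_finite_in X \<V>))"

end

theory Submission
  imports Defs
begin

text \<open>
  The heart of the matter is that on a card \<open>X - {x}\<close> of \<open>X = S\<^sup>K\<close>, \<open>K\<close> uncountable, every
  continuous real function \<open>f\<close> satisfies the Cauchy criterion at \<open>x\<close>. Otherwise pairs of points
  arbitrarily close to \<open>x\<close> on more and more coordinates witness oscillation \<open>> e\<close>; closing off
  countably often under the finite sets of coordinates controlling \<open>f\<close> near these points gives a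
  countable set \<open>C\<close> of coordinates. Changing \<open>x\<close> in a coordinate outside \<open>C\<close> gives a point \<open>q\<close>,
  and the point that agrees with a witness on \<open>C\<close> and with \<open>q\<close> elsewhere is controlled both by
  the witness and by \<open>q\<close>, so all witnesses have \<open>f\<close>-values near \<open>f q\<close>.

  Hence no Urysohn function separates two disjoint closed subsets of the card accumulating at
  \<open>x\<close>, and such sets exist (points agreeing with \<open>x\<close> on a countable infinite \<open>A\<close>, resp. on
  \<open>K - A\<close>): the card is not normal, so not paracompact. It is not Lindel\<ouml>f, since the cover by
  the sets \<open>{y. y k \<noteq> x k}\<close> needs uncountably many members, and not compact as \<open>{x}\<close> is not open.

  For a reconstruction \<open>Z\<close>, all cards are Hausdorff, locally compact and dense in themselves, so
  \<open>Z\<close> is as well. A homeomorphism \<open>g\<close> between cards \<open>X - {x}\<close> and \<open>Z - {z}\<close> extends by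
  \<open>x \<mapsto> z\<close>: continuity at \<open>x\<close> follows from the Cauchy criterion for \<open>\<phi> \<circ> g\<close>, \<open>\<phi>\<close> an Urysohn
  function of \<open>z\<close>; and a continuous bijection from the compact \<open>X\<close> onto the Hausdorff \<open>Z\<close> is a
  homeomorphism.
\<close>

lemma topspace_deleted_card [simp]: "topspace (deleted_card X x) = topspace X - {x}"
  by (auto simp: deleted_card_def)

lemma openin_deleted_card:
  assumes "t1_space X"
  shows "openin (deleted_card X x) U \<longleftrightarrow> openin X U \<and> x \<notin> U"
proof -
  have "openin X (topspace X - {x})"
    using assms by (simp add: t1_space_openin_delete_alt)
  then show ?thesis
    unfolding deleted_card_def by (auto simp: openin_open_subtopology dest: openin_subset)
qed

lemma not_compact_space_deleted_card:
  assumes "Hausdorff_space X" "x \<in> topspace X" "\<not> openin X {x}"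
  shows "\<not> compact_space (deleted_card X x)"
proof
  assume "compact_space (deleted_card X x)"
  then have "compactin X (topspace X - {x})"
    by (simp add: deleted_card_def compactin_subspace)
  then have "closedin X (topspace X - {x})"
    using assms(1) compactin_imp_closedin by blast
  then show False
    using assms(2,3) by (simp add: closedin_def Diff_Diff_Int)
qed

section \<open>Paracompact regular spaces are normal\<close>

lemma paracompact_space_shrink_closure:
  assumes para: "paracompact_space T" and S: "closedin T S"
    and nbhds: "\<And>p. p \<in> S \<Longrightarrow> \<exists>U. openin T U \<and> p \<in> U \<and> disjnt (T closure_of U) R"
  obtains V where "openin T V" "S \<subseteq> V" "disjnt (T closure_of V) R"
proof -
  obtain U where U: "\<And>p. p \<in> S \<Longrightarrow> openin T (U p) \<and> p \<in> U p \<and> disjnt (T closure_of (U p)) R"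
    using nbhds by metis
  define \<U> where "\<U> = insert (topspace T - S) (U ` S)"
  have "\<forall>W\<in>\<U>. openin T W"
    using U S unfolding \<U>_def by blast
  moreover have "topspace T \<subseteq> \<Union>\<U>"
    using U unfolding \<U>_def by blast
  ultimately obtain \<V> where \<V>: "\<forall>V\<in>\<V>. openin T V" "topspace T \<subseteq> \<Union>\<V>"
      "\<forall>V\<in>\<V>. \<exists>W\<in>\<U>. V \<subseteq> W" "locally_finite_in T \<V>"
    using para unfolding paracompact_space_def by (elim allE[of _ \<U>]) blast
  define \<W> where "\<W> = {V \<in> \<V>. V \<inter> S \<noteq> {}}"
  have closure_V: "disjnt (T closure_of V) R" if "V \<in> \<W>" for V
  proof -
    have "V \<in> \<V>" "V \<inter> S \<noteq> {}"
      using that by (auto simp: \<W>_def)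
    then obtain W where "W \<in> \<U>" "V \<subseteq> W"
      using \<V>(3) by blast
    with \<open>V \<inter> S \<noteq> {}\<close> obtain p where "p \<in> S" "V \<subseteq> U p"
      unfolding \<U>_def by blast
    then have "T closure_of V \<subseteq> T closure_of U p"
      by (simp add: closure_of_mono)
    with U[OF \<open>p \<in> S\<close>] show ?thesis
      using disjnt_subset1 by blast
  qed
  show thesis
  proof
    show "openin T (\<Union>\<W>)"
      using \<V>(1) unfolding \<W>_def by blast
    show "S \<subseteq> \<Union>\<W>"
      using \<V>(2) closedin_subset[OF S] unfolding \<W>_def by blast
    have "locally_finite_in T \<W>"
      by (rule locally_finite_in_subset[OF \<V>(4)]) (auto simp: \<W>_def)
    then have "T closure_of \<Union>\<W> = (\<Union>V\<in>\<W>. T closure_of V)"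
      by (rule closure_of_locally_finite_Union)
    then show "disjnt (T closure_of \<Union>\<W>) R"
      using closure_V by (simp add: disjnt_Union1)
  qed
qed

lemma paracompact_regular_imp_normal_space:
  assumes "regular_space T" "paracompact_space T"
  shows "normal_space T"
  unfolding normal_space_def
proof clarify
  fix R S assume R: "closedin T R" and S: "closedin T S" and "disjnt R S"
  have nbhds: "\<exists>U. openin T U \<and> p \<in> U \<and> disjnt (T closure_of U) R" if "p \<in> S" for p
  proof -
    have "p \<in> topspace T - R"
      using that closedin_subset[OF S] \<open>disjnt R S\<close> by (auto simp: disjnt_def)
    then show ?thesis
      using assms(1) R unfolding regular_space by (meson disjnt_sym)
  qed
  obtain V where V: "openin T V" "S \<subseteq> V" "disjnt (T closure_of V) R"
    using paracompact_space_shrink_closure[OF assms(2) S nbhds] by blast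
  show "\<exists>U V. openin T U \<and> openin T V \<and> R \<subseteq> U \<and> S \<subseteq> V \<and> disjnt U V"
  proof (intro exI conjI)
    show "openin T (topspace T - T closure_of V)"
      using closedin_closure_of[of T V] by (simp add: closedin_def)
    show "R \<subseteq> topspace T - T closure_of V"
      using V(3) closedin_subset[OF R] by (auto simp: disjnt_def)
    show "disjnt (topspace T - T closure_of V) V"
      using closure_of_subset[OF openin_subset[OF V(1)]] by (auto simp: disjnt_def)
  qed (use V in auto)
qed

section \<open>Spaces whose cards are Hausdorff, locally compact and dense in themselves\<close>

definition dense_in_itself :: "'a topology \<Rightarrow> bool" where
  "dense_in_itself X \<longleftrightarrow> (\<forall>x\<in>topspace X. \<not> openin X {x})"

lemma homeomorphic_dense_in_itself:
  assumes "X homeomorphic_space Y" "dense_in_itself Y"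
  shows "dense_in_itself X"
  unfolding dense_in_itself_def
proof (intro ballI notI)
  fix x assume "x \<in> topspace X" "openin X {x}"
  obtain f where f: "homeomorphic_map X Y f"
    using assms(1) homeomorphic_space by blast
  then have "openin Y {f x}"
    using homeomorphic_map_openness[OF f, of "{x}"] \<open>x \<in> topspace X\<close> \<open>openin X {x}\<close> by simp
  moreover have "f x \<in> topspace Y"
    using f \<open>x \<in> topspace X\<close> homeomorphic_imp_surjective_map by blast
  ultimately show False
    using assms(2) unfolding dense_in_itself_def by blast
qed

lemma infinite_topspace_if_dense_in_itself:
  assumes "Hausdorff_space X" "dense_in_itself X" "topspace X \<noteq> {}"
  shows "infinite (topspace X)"
proof (rule infinite_perfect_set[OF assms(1) _ assms(3)])
  show "topspace X \<subseteq> X derived_set_of topspace X"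
    using assms(2) by (simp add: derived_set_of_topspace dense_in_itself_def subset_iff)
qed

lemma exists_point_outside_finite:
  assumes "infinite (topspace Z)" "finite F"
  obtains w where "w \<in> topspace Z" "w \<notin> F"
  using Diff_infinite_finite[OF assms(2,1)] infinite_imp_nonempty by blast

lemma t1_space_if_deleted_cards:
  assumes "infinite (topspace Z)" "\<And>z. z \<in> topspace Z \<Longrightarrow> t1_space (deleted_card Z z)"
  shows "t1_space Z"
  unfolding t1_space_def
proof (intro ballI impI)
  fix p q assume p: "p \<in> topspace Z" and q: "q \<in> topspace Z" and "p \<noteq> q"
  obtain w where w: "w \<in> topspace Z" "w \<notin> {p, q}"
    using exists_point_outside_finite[OF assms(1), of "{p, q}"] by auto
  then have "p \<in> topspace (deleted_card Z w)" "q \<in> topspace (deleted_card Z w)"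
    using p q by auto
  then obtain U' where "openin (deleted_card Z w) U'" "p \<in> U'" "q \<notin> U'"
    using assms(2)[OF w(1)] \<open>p \<noteq> q\<close> unfolding t1_space_def by blast
  then obtain U where "openin Z U" "U' = U \<inter> (topspace Z - {w})"
    unfolding deleted_card_def openin_subtopology by blast
  then show "\<exists>U. openin Z U \<and> p \<in> U \<and> q \<notin> U"
    using \<open>p \<in> U'\<close> \<open>q \<notin> U'\<close> q w by blast
qed

lemma Hausdorff_space_if_deleted_cards:
  assumes "infinite (topspace Z)" "\<And>z. z \<in> topspace Z \<Longrightarrow> Hausdorff_space (deleted_card Z z)"
  shows "Hausdorff_space Z"
  unfolding Hausdorff_space_def
proof (intro allI impI)
  fix p q assume pq: "p \<in> topspace Z \<and> q \<in> topspace Z \<and> p \<noteq> q"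
  have "t1_space Z"
    by (rule t1_space_if_deleted_cards[OF assms(1) Hausdorff_imp_t1_space[OF assms(2)]])
  obtain w where w: "w \<in> topspace Z" "w \<notin> {p, q}"
    using exists_point_outside_finite[OF assms(1), of "{p, q}"] by auto
  then have "p \<in> topspace (deleted_card Z w)" "q \<in> topspace (deleted_card Z w)"
    using pq by auto
  then obtain U V where "openin (deleted_card Z w) U" "openin (deleted_card Z w) V"
      "p \<in> U" "q \<in> V" "disjnt U V"
    using assms(2)[OF w(1)] pq unfolding Hausdorff_space_def by blast
  then show "\<exists>U V. openin Z U \<and> openin Z V \<and> p \<in> U \<and> q \<in> V \<and> disjnt U V"
    using openin_deleted_card[OF \<open>t1_space Z\<close>] by meson
qed

lemma locally_compact_space_if_deleted_cards:
  assumes "t1_space Z" "infinite (topspace Z)"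
    and "\<And>z. z \<in> topspace Z \<Longrightarrow> locally_compact_space (deleted_card Z z)"
  shows "locally_compact_space Z"
  unfolding locally_compact_space_def
proof
  fix p assume p: "p \<in> topspace Z"
  obtain w where w: "w \<in> topspace Z" "w \<notin> {p}"
    using exists_point_outside_finite[OF assms(2), of "{p}"] by auto
  then have "p \<in> topspace (deleted_card Z w)"
    using p by auto
  then obtain U C where "openin (deleted_card Z w) U" "compactin (deleted_card Z w) C" "p \<in> U" "U \<subseteq> C"
    using assms(3)[OF w(1)] unfolding locally_compact_space_def by blast
  then show "\<exists>U C. openin Z U \<and> compactin Z C \<and> p \<in> U \<and> U \<subseteq> C"
    using openin_deleted_card[OF assms(1)] compactin_subtopology by (metis deleted_card_def)
qed

lemma dense_in_itself_if_deleted_cards: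
  assumes "infinite (topspace Z)" "\<And>z. z \<in> topspace Z \<Longrightarrow> dense_in_itself (deleted_card Z z)"
  shows "dense_in_itself Z"
  unfolding dense_in_itself_def
proof (intro ballI notI)
  fix z assume z: "z \<in> topspace Z" and "openin Z {z}"
  obtain w where w: "w \<in> topspace Z" "w \<notin> {z}"
    using exists_point_outside_finite[OF assms(1), of "{z}"] by auto
  have "openin (deleted_card Z w) ({z} \<inter> (topspace Z - {w}))"
    unfolding deleted_card_def using \<open>openin Z {z}\<close> by (rule openin_subtopology_Int)
  moreover have "{z} \<inter> (topspace Z - {w}) = {z}"
    using z w by auto
  ultimately show False
    using assms(2)[OF w(1)] z w unfolding dense_in_itself_def by auto
qed

lemma Hausdorff_locally_compact_dense_if_deleted_cards:
  assumes "infinite (topspace Z)"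
    and "\<And>z. z \<in> topspace Z \<Longrightarrow> Hausdorff_space (deleted_card Z z) \<and>
      locally_compact_space (deleted_card Z z) \<and> dense_in_itself (deleted_card Z z)"
  shows "Hausdorff_space Z \<and> locally_compact_space Z \<and> dense_in_itself Z"
proof -
  have "Hausdorff_space Z"
    using Hausdorff_space_if_deleted_cards[OF assms(1)] assms(2) by blast
  moreover have "locally_compact_space Z"
    using locally_compact_space_if_deleted_cards[OF Hausdorff_imp_t1_space[OF \<open>Hausdorff_space Z\<close>] assms(1)]
      assms(2) by blast
  moreover have "dense_in_itself Z"
    using dense_in_itself_if_deleted_cards[OF assms(1)] assms(2) by blast
  ultimately show ?thesis
    by blast
qed

section \<open>Points at which continuous functions on the card are Cauchy\<close>

text \<open>Equivalently, every continuous real function on \<open>X - {x}\<close> extends continuously to \<open>X\<close>.\<close>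

definition Cauchy_at_deleted_point :: "'a topology \<Rightarrow> 'a \<Rightarrow> bool" where
  "Cauchy_at_deleted_point X x \<longleftrightarrow>
     (\<forall>f e. continuous_map (deleted_card X x) euclideanreal f \<and> e > 0 \<longrightarrow>
        (\<exists>W. openin X W \<and> x \<in> W \<and> (\<forall>y\<in>W - {x}. \<forall>y'\<in>W - {x}. \<bar>f y - f y'\<bar> \<le> e)))"

lemma Cauchy_at_deleted_pointD:
  assumes "Cauchy_at_deleted_point X x" "continuous_map (deleted_card X x) euclideanreal f" "e > 0"
  obtains W where "openin X W" "x \<in> W" "\<And>y y'. y \<in> W - {x} \<Longrightarrow> y' \<in> W - {x} \<Longrightarrow> \<bar>f y - f y'\<bar> \<le> e"
  using assms unfolding Cauchy_at_deleted_point_def by meson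

lemma not_normal_space_deleted_card:
  assumes Cauchy: "Cauchy_at_deleted_point X x"
    and F: "closedin (deleted_card X x) F1" "closedin (deleted_card X x) F2" "disjnt F1 F2"
    and x: "x \<in> X closure_of F1" "x \<in> X closure_of F2"
  shows "\<not> normal_space (deleted_card X x)"
proof
  assume "normal_space (deleted_card X x)"
  then obtain f where f: "continuous_map (deleted_card X x) euclideanreal f" "f ` F1 \<subseteq> {0}" "f ` F2 \<subseteq> {1}"
    using Urysohn_lemma_alt F by metis
  obtain W where W: "openin X W" "x \<in> W" "\<And>y y'. y \<in> W - {x} \<Longrightarrow> y' \<in> W - {x} \<Longrightarrow> \<bar>f y - f y'\<bar> \<le> 1/2"
    using Cauchy_at_deleted_pointD[OF Cauchy f(1), of "1/2"] by auto
  obtain y1 y2 where "y1 \<in> F1" "y1 \<in> W" "y2 \<in> F2" "y2 \<in> W"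
    using x W(1,2) unfolding in_closure_of by blast
  moreover have "x \<notin> F1" "x \<notin> F2"
    using closedin_subset[OF F(1)] closedin_subset[OF F(2)] by auto
  ultimately have "\<bar>f y1 - f y2\<bar> \<le> 1/2"
    using W(3) by blast
  moreover have "f y1 = 0" "f y2 = 1"
    using f \<open>y1 \<in> F1\<close> \<open>y2 \<in> F2\<close> by auto
  ultimately show False
    by simp
qed

lemma closedin_image_deleted_card:
  assumes "compact_space X" "Hausdorff_space Z"
    and g: "continuous_map (deleted_card X x0) (deleted_card Z z0) g"
    and W: "openin X W" "x0 \<in> W"
  shows "closedin Z (g ` (topspace X - W))"
proof -
  have "compactin (deleted_card X x0) (topspace X - W)"
    using closedin_compact_space[OF assms(1)] W unfolding deleted_card_def
    by (auto simp: compactin_subtopology)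
  then have "compactin Z (g ` (topspace X - W))"
    using image_compactin[OF _ g] unfolding deleted_card_def compactin_subtopology by blast
  then show ?thesis
    using compactin_imp_closedin[OF assms(2)] by blast
qed

lemma deleted_card_homeomorphism_tendsto:
  assumes X: "compact_space X" "Cauchy_at_deleted_point X x0"
    and Z: "completely_regular_space Z" "Hausdorff_space Z" "\<not> openin Z {z0}"
    and gh: "homeomorphic_maps (deleted_card X x0) (deleted_card Z z0) g h"
    and V: "openin Z V" "z0 \<in> V"
  shows "\<exists>W. openin X W \<and> x0 \<in> W \<and> (\<forall>y\<in>W - {x0}. g y \<in> V)"
proof -
  have g: "continuous_map (deleted_card X x0) (deleted_card Z z0) g"
    and h: "\<And>z. z \<in> topspace Z - {z0} \<Longrightarrow> h z \<in> topspace X - {x0} \<and> g (h z) = z"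
    using gh continuous_map_image_subset_topspace[of "deleted_card Z z0" "deleted_card X x0" h]
    unfolding homeomorphic_maps_def by auto
  have gZ: "g y \<in> topspace Z - {z0}" if "y \<in> topspace X - {x0}" for y
    using continuous_map_image_subset_topspace[OF g] that by auto
  obtain \<phi> where \<phi>: "continuous_map Z euclideanreal \<phi>" "\<phi> z0 = 0" "\<phi> ` (topspace Z - V) \<subseteq> {1}"
    using Z(1) V unfolding completely_regular_space_alt' by blast
  have "continuous_map (deleted_card X x0) Z g"
    using g unfolding deleted_card_def[of Z] by (simp add: continuous_map_in_subtopology)
  then have \<phi>g: "continuous_map (deleted_card X x0) euclideanreal (\<phi> \<circ> g)"
    using \<phi>(1) by (rule continuous_map_compose)
  obtain W where W: "openin X W" "x0 \<in> W"
      and osc: "\<And>y y'. y \<in> W - {x0} \<Longrightarrow> y' \<in> W - {x0} \<Longrightarrow> \<bar>\<phi> (g y) - \<phi> (g y')\<bar> \<le> 1/4"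
    using Cauchy_at_deleted_pointD[OF X(2) \<phi>g, of "1/4"] by auto
  have "g y' \<in> V" if y': "y' \<in> W - {x0}" for y'
  proof (rule ccontr)
    assume "g y' \<notin> V"
    moreover have "g y' \<in> topspace Z"
      using gZ y' openin_subset[OF W(1)] by blast
    ultimately have "\<phi> (g y') = 1"
      using \<phi>(3) by blast
    \<comment> \<open>Points of \<open>N\<close> other than \<open>z0\<close> come from \<open>W\<close>, so \<open>\<phi>\<close> is near \<open>\<phi> (g y') = 1\<close> there.\<close>
    define N where "N = (topspace Z - g ` (topspace X - W)) \<inter> {z \<in> topspace Z. \<phi> z < 1/2}"
    have "openin Z {z \<in> topspace Z. \<phi> z < 1/2}"
      using openin_continuous_map_preimage[OF \<phi>(1), of "{..<1/2}"] by simp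
    then have "openin Z N"
      using closedin_image_deleted_card[OF X(1) Z(2) g W] unfolding N_def by blast
    moreover have "z0 \<in> N"
      using gZ V openin_subset[OF V(1)] \<phi>(2) W(2) by (auto simp: N_def)
    ultimately have "N \<noteq> {z0}"
      using Z(3) by auto
    with \<open>z0 \<in> N\<close> obtain z where z: "z \<in> N" "z \<noteq> z0"
      by blast
    have hz: "h z \<in> topspace X - {x0}" "g (h z) = z"
      using h[of z] z by (auto simp: N_def)
    have "h z \<in> W"
    proof (rule ccontr)
      assume "h z \<notin> W"
      then have "z \<in> g ` (topspace X - W)"
        using hz by (metis DiffD1 DiffI image_eqI)
      then show False
        using z by (simp add: N_def)
    qed
    then have "\<bar>\<phi> z - \<phi> (g y')\<bar> \<le> 1/4"
      using osc[of "h z" y'] hz y' by simp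
    with \<open>\<phi> (g y') = 1\<close> z show False
      by (simp add: N_def)
  qed
  with W show ?thesis
    by blast
qed

lemma continuous_map_extend_deleted_card:
  assumes "t1_space X" "t1_space Z" "z0 \<in> topspace Z"
    and g: "continuous_map (deleted_card X x0) (deleted_card Z z0) g"
    and tendsto: "\<And>V. openin Z V \<Longrightarrow> z0 \<in> V \<Longrightarrow> \<exists>W. openin X W \<and> x0 \<in> W \<and> (\<forall>y\<in>W - {x0}. g y \<in> V)"
  shows "continuous_map X Z (\<lambda>y. if y = x0 then z0 else g y)" (is "continuous_map X Z ?G")
  unfolding continuous_map
proof (intro conjI allI impI)
  show "?G ` topspace X \<subseteq> topspace Z"
    using continuous_map_image_subset_topspace[OF g] assms(3) by auto
  fix V assume V: "openin Z V"
  have "openin (deleted_card Z z0) (V - {z0})"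
    using t1_space_openin_delete_alt[of Z] assms(2) V openin_deleted_card[OF assms(2)] by blast
  then have "openin (deleted_card X x0) {y \<in> topspace X - {x0}. g y \<in> V - {z0}}"
    using openin_continuous_map_preimage[OF g] by fastforce
  then have g_open: "openin X {y \<in> topspace X - {x0}. g y \<in> V - {z0}}"
    using openin_deleted_card[OF assms(1)] by blast
  show "openin X {y \<in> topspace X. ?G y \<in> V}"
  proof (cases "z0 \<in> V")
    case False
    then have "{y \<in> topspace X. ?G y \<in> V} = {y \<in> topspace X - {x0}. g y \<in> V - {z0}}"
      by auto
    with g_open show ?thesis
      by simp
  next
    case True
    obtain W where W: "openin X W" "x0 \<in> W" "\<forall>y\<in>W - {x0}. g y \<in> V"
      using tendsto[OF V True] by blast
    have "{y \<in> topspace X. ?G y \<in> V} = W \<union> {y \<in> topspace X - {x0}. g y \<in> V - {z0}}"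
      using True openin_subset[OF W(1)] W(2,3) continuous_map_image_subset_topspace[OF g] by auto
    with g_open W(1) show ?thesis
      by auto
  qed
qed

lemma homeomorphic_space_if_deleted_cards_homeomorphic:
  assumes X: "compact_space X" "Hausdorff_space X" "x0 \<in> topspace X" "Cauchy_at_deleted_point X x0"
    and Z: "locally_compact_space Z" "Hausdorff_space Z" "z0 \<in> topspace Z" "\<not> openin Z {z0}"
    and hom: "deleted_card X x0 homeomorphic_space deleted_card Z z0"
  shows "X homeomorphic_space Z"
proof -
  obtain g h where gh: "homeomorphic_maps (deleted_card X x0) (deleted_card Z z0) g h"
    using hom homeomorphic_space_def by blast
  then have g: "continuous_map (deleted_card X x0) (deleted_card Z z0) g"
    and h: "continuous_map (deleted_card Z z0) (deleted_card X x0) h"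
    and hg: "\<And>y. y \<in> topspace X - {x0} \<Longrightarrow> h (g y) = y"
    and gh': "\<And>z. z \<in> topspace Z - {z0} \<Longrightarrow> g (h z) = z"
    unfolding homeomorphic_maps_def by auto
  have gZ: "\<And>y. y \<in> topspace X - {x0} \<Longrightarrow> g y \<in> topspace Z - {z0}"
    and hX: "\<And>z. z \<in> topspace Z - {z0} \<Longrightarrow> h z \<in> topspace X - {x0}"
    using continuous_map_image_subset_topspace[OF g] continuous_map_image_subset_topspace[OF h] by auto
  have "completely_regular_space Z"
    by (rule locally_compact_regular_imp_completely_regular_space[OF Z(1) disjI1[OF Z(2)]])
  define G where "G y = (if y = x0 then z0 else g y)" for y
  have cont: "continuous_map X Z G"
    unfolding G_def
    using continuous_map_extend_deleted_card[OF Hausdorff_imp_t1_space[OF X(2)] Hausdorff_imp_t1_space[OF Z(2)] Z(3) g]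
      deleted_card_homeomorphism_tendsto[OF X(1,4) \<open>completely_regular_space Z\<close> Z(2,4) gh]
    by blast
  have "G ` topspace X = topspace Z"
  proof
    show "G ` topspace X \<subseteq> topspace Z"
      using cont continuous_map_image_subset_topspace by blast
    show "topspace Z \<subseteq> G ` topspace X"
    proof
      fix z assume "z \<in> topspace Z"
      then show "z \<in> G ` topspace X"
        using X(3) hX[of z] gh'[of z] by (cases "z = z0") (force simp: G_def)+
    qed
  qed
  moreover have "inj_on G (topspace X)"
  proof
    fix a b assume "a \<in> topspace X" "b \<in> topspace X" "G a = G b"
    then show "a = b"
      using gZ hg by (simp add: G_def split: if_splits) (metis DiffI singletonD)+
  qed
  ultimately have "homeomorphic_map X Z G"
    by (rule continuous_imp_homeomorphic_map[OF cont X(1) Z(2)])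
  then show ?thesis
    using homeomorphic_space by blast
qed

section \<open>Uncountable powers of a set of reals\<close>

lemma finite_subset_Union_mono:
  fixes B :: "nat \<Rightarrow> 'a set"
  assumes "mono B" "finite A" "A \<subseteq> (\<Union>n. B n)"
  shows "\<exists>N. A \<subseteq> B N"
  using assms(2,3)
proof (induction A rule: finite_induct)
  case empty
  then show ?case
    by blast
next
  case (insert a A)
  then obtain N m where "A \<subseteq> B N" "a \<in> B m"
    by blast
  moreover have "B N \<subseteq> B (max N m)" "B m \<subseteq> B (max N m)"
    using monoD[OF assms(1)] by simp_all
  ultimately show ?case
    by blast
qed

lemma increasing_closure_sequence:
  fixes \<Phi> :: "nat \<Rightarrow> 'a set \<Rightarrow> 'a set"
  assumes "\<And>n A. finite A \<Longrightarrow> A \<subseteq> K \<Longrightarrow> finite (\<Phi> n A) \<and> \<Phi> n A \<subseteq> K"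
  shows "\<exists>B. mono B \<and> (\<forall>n. finite (B n) \<and> B n \<subseteq> K) \<and> (\<forall>n. \<Phi> n (B n) \<subseteq> B (Suc n))"
proof (intro exI conjI allI)
  define B where "B = rec_nat {} (\<lambda>n A. A \<union> \<Phi> n A)"
  have B_Suc: "B (Suc n) = B n \<union> \<Phi> n (B n)" for n
    by (simp add: B_def)
  show "mono B"
    unfolding mono_iff_le_Suc by (simp add: B_Suc)
  show "\<Phi> n (B n) \<subseteq> B (Suc n)" for n
    by (simp add: B_Suc)
  show "finite (B n)" "B n \<subseteq> K" for n
  proof (induction n)
    case 0
    show "finite (B 0)" "B 0 \<subseteq> K"
      by (simp_all add: B_def)
  next
    case (Suc n)
    then show "finite (B (Suc n))" "B (Suc n) \<subseteq> K"
      using assms[of "B n" n] by (simp_all add: B_Suc)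
  qed
qed

definition toggle :: "('k \<Rightarrow> real) \<Rightarrow> 'k \<Rightarrow> 'k \<Rightarrow> real" where
  "toggle x c = x(c := (if x c = 0 then 1 else 0))"

lemma toggle_other [simp]: "k \<noteq> c \<Longrightarrow> toggle x c k = x k"
  by (simp add: toggle_def)

lemma toggle_same_neq: "toggle x c c \<noteq> x c"
  by (simp add: toggle_def)

lemma toggle_neq: "toggle x c \<noteq> x"
  using toggle_same_neq by metis

locale uncountable_power =
  fixes S :: "real set" and K :: "'k set"
  assumes zero_in_S: "0 \<in> S" and one_in_S: "1 \<in> S" and uncountable_K: "uncountable K"
begin

abbreviation cube :: "('k \<Rightarrow> real) topology" where
  "cube \<equiv> product_topology (\<lambda>_. top_of_set S) K"

abbreviation P :: "('k \<Rightarrow> real) set" where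
  "P \<equiv> PiE K (\<lambda>_. S)"

definition coordinate_ball :: "('k \<Rightarrow> real) \<Rightarrow> 'k set \<Rightarrow> real \<Rightarrow> ('k \<Rightarrow> real) set" where
  "coordinate_ball y F r = {z \<in> P. \<forall>k\<in>F. \<bar>z k - y k\<bar> < r}"

lemma infinite_K: "infinite K"
  using uncountable_K countable_finite by blast

lemma uncountable_diff_countable:
  assumes "countable C"
  shows "uncountable (K - C)"
proof
  assume "countable (K - C)"
  then have "countable ((K - C) \<union> C)"
    using assms by (rule countable_Un)
  then show False
    using uncountable_K countable_subset[of K "(K - C) \<union> C"] by blast
qed

lemma toggle_in_P: "x \<in> P \<Longrightarrow> c \<in> K \<Longrightarrow> toggle x c \<in> P"
  using zero_in_S one_in_S by (auto simp: toggle_def PiE_iff extensional_def)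

lemma toggle_in_coordinate_ball:
  assumes "x \<in> P" "c \<in> K - F" "r > 0"
  shows "toggle x c \<in> coordinate_ball x F r"
proof -
  have "toggle x c k = x k" if "k \<in> F" for k
    using that assms(2) by (metis DiffD2 toggle_other)
  then show ?thesis
    using assms by (simp add: coordinate_ball_def toggle_in_P)
qed

lemma Hausdorff_cube: "Hausdorff_space cube"
  by (simp add: Hausdorff_space_product_topology Hausdorff_space_subtopology)

lemma compact_cube: "compact S \<Longrightarrow> compact_space cube"
  by (simp add: compact_space_product_topology compact_space_subtopology compactin_euclidean_iff)

lemma regular_cube: "regular_space cube"
  by (simp add: regular_space_product_topology regular_space_subtopology regular_space_euclidean)

lemma continuous_map_coordinate: "k \<in> K \<Longrightarrow> continuous_map cube euclideanreal (\<lambda>z. z k)"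
  using continuous_map_product_projection[of k K "\<lambda>_. top_of_set S"]
  by (simp add: continuous_map_in_subtopology)

lemma openin_coordinate_ball:
  assumes "finite F" "F \<subseteq> K"
  shows "openin cube (coordinate_ball y F r)"
  using assms
proof (induction F)
  case empty
  then show ?case
    using openin_topspace[of cube] by (simp add: coordinate_ball_def)
next
  case (insert k F)
  have "openin cube {z \<in> topspace cube. z k \<in> ball (y k) r}"
    using insert.prems by (intro openin_continuous_map_preimage[OF continuous_map_coordinate]) auto
  then have "openin cube (coordinate_ball y F r \<inter> {z \<in> topspace cube. z k \<in> ball (y k) r})"
    using insert by (intro openin_Int) auto
  moreover have "coordinate_ball y F r \<inter> {z \<in> topspace cube. z k \<in> ball (y k) r}
      = coordinate_ball y (insert k F) r"
    by (auto simp: coordinate_ball_def dist_real_def abs_minus_commute)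
  ultimately show ?case
    by simp
qed

lemma coordinate_ball_subset_openin:
  assumes "openin cube W" "y \<in> W"
  obtains F r where "finite F" "F \<subseteq> K" "r > 0" "coordinate_ball y F r \<subseteq> W"
proof -
  obtain U where U: "finite {k \<in> K. U k \<noteq> S}" "\<forall>k\<in>K. openin (top_of_set S) (U k)"
     "y \<in> PiE K U" "PiE K U \<subseteq> W"
    using assms openin_product_topology_alt[of "\<lambda>_. top_of_set S" K W] by auto
  define F where "F = {k \<in> K. U k \<noteq> S}"
  have "\<exists>e>0. \<forall>t\<in>S. dist t (y k) < e \<longrightarrow> t \<in> U k" if "k \<in> F" for k
    using U that unfolding F_def by (auto simp: PiE_iff openin_euclidean_subtopology_iff)
  then obtain e where e: "\<And>k. k \<in> F \<Longrightarrow> e k > 0 \<and> (\<forall>t\<in>S. dist t (y k) < e k \<longrightarrow> t \<in> U k)"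
    by metis
  define r where "r = Min (insert 1 (e ` F))"
  have "finite F"
    using U(1) by (simp add: F_def)
  then have r: "r > 0" "\<And>k. k \<in> F \<Longrightarrow> r \<le> e k"
    using e by (auto simp: r_def)
  have "coordinate_ball y F r \<subseteq> PiE K U"
  proof
    fix z assume z: "z \<in> coordinate_ball y F r"
    have "z k \<in> U k" if "k \<in> K" for k
    proof (cases "k \<in> F")
      case True
      have "z k \<in> S" "\<bar>z k - y k\<bar> < r"
        using z True that by (auto simp: coordinate_ball_def PiE_iff)
      then show ?thesis
        using e[OF True] r(2)[OF True] by (simp add: dist_real_def)
    next
      case False
      then show ?thesis
        using z that by (auto simp: F_def coordinate_ball_def)
    qed
    then show "z \<in> PiE K U"
      using z by (auto simp: coordinate_ball_def PiE_iff)
  qed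
  then show thesis
    using that[OF \<open>finite F\<close> _ r(1)] U(4) by (auto simp: F_def)
qed

lemma toggles_in_openin:
  assumes "openin cube W" "x \<in> W"
  obtains F where "finite F" "\<forall>c\<in>K - F. toggle x c \<in> W"
proof -
  obtain F r where F: "finite F" "F \<subseteq> K" "r > 0" "coordinate_ball x F r \<subseteq> W"
    by (rule coordinate_ball_subset_openin[OF assms])
  have "x \<in> P"
    using openin_subset[OF assms(1)] assms(2) by auto
  show thesis
  proof (rule that[OF F(1)], intro ballI)
    fix c assume "c \<in> K - F"
    then show "toggle x c \<in> W"
      using toggle_in_coordinate_ball[OF \<open>x \<in> P\<close> _ F(3)] F(4) by blast
  qed
qed

lemma not_openin_singleton: "x \<in> P \<Longrightarrow> \<not> openin cube {x}"
proof
  assume "openin cube {x}"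
  obtain F where F: "finite F" "\<forall>c\<in>K - F. toggle x c \<in> {x}"
    using toggles_in_openin[OF \<open>openin cube {x}\<close> singletonI] by blast
  obtain c where "c \<in> K - F"
    using infinite_imp_nonempty[OF Diff_infinite_finite[OF F(1) infinite_K]] by blast
  then have "toggle x c = x"
    using F(2) by blast
  then show False
    using toggle_neq[of x c] by simp
qed

lemma in_closure_of_toggles:
  assumes "x \<in> P" "infinite B" "B \<subseteq> K"
  shows "x \<in> cube closure_of (toggle x ` B)"
  unfolding in_closure_of
proof (intro conjI allI impI)
  show "x \<in> topspace cube"
    using assms(1) by simp
  fix W assume W: "x \<in> W \<and> openin cube W"
  obtain F where F: "finite F" "\<forall>c\<in>K - F. toggle x c \<in> W"
    using toggles_in_openin[of W x] W by blast
  obtain c where "c \<in> B - F"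
    using infinite_imp_nonempty[OF Diff_infinite_finite[OF F(1) assms(2)]] by blast
  then show "\<exists>y. y \<in> toggle x ` B \<and> y \<in> W"
    using F(2) assms(3) by blast
qed

lemma dense_in_itself_deleted_card: "dense_in_itself (deleted_card cube x)"
  unfolding dense_in_itself_def
proof (intro ballI notI)
  fix y assume "y \<in> topspace (deleted_card cube x)" "openin (deleted_card cube x) {y}"
  then have "y \<in> P" "openin cube {y}"
    using openin_deleted_card[OF Hausdorff_imp_t1_space[OF Hausdorff_cube]] by auto
  then show False
    using not_openin_singleton by blast
qed

definition coordinate_modulus ::
    "('k \<Rightarrow> real) \<Rightarrow> (('k \<Rightarrow> real) \<Rightarrow> real) \<Rightarrow> real \<Rightarrow> (('k \<Rightarrow> real) \<Rightarrow> 'k set) \<Rightarrow> (('k \<Rightarrow> real) \<Rightarrow> real) \<Rightarrow> bool"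
  where "coordinate_modulus x f e E r \<longleftrightarrow>
    (\<forall>y\<in>P - {x}. finite (E y) \<and> E y \<subseteq> K \<and> r y > 0 \<and>
       (\<forall>z\<in>coordinate_ball y (E y) (r y) - {x}. \<bar>f z - f y\<bar> < e))"

lemma coordinate_modulus_exists:
  assumes f: "continuous_map (deleted_card cube x) euclideanreal f" and "e > 0"
  obtains E r where "coordinate_modulus x f e E r"
proof -
  have "\<exists>F r. finite F \<and> F \<subseteq> K \<and> r > 0 \<and> (\<forall>z\<in>coordinate_ball y F r - {x}. \<bar>f z - f y\<bar> < e)"
    if y: "y \<in> P - {x}" for y
  proof -
    have "openin (deleted_card cube x) {z \<in> topspace (deleted_card cube x). f z \<in> ball (f y) e}"
      by (rule openin_continuous_map_preimage[OF f]) simp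
    then have "openin cube {z \<in> P - {x}. f z \<in> ball (f y) e}"
      using openin_deleted_card[OF Hausdorff_imp_t1_space[OF Hausdorff_cube]] by simp
    moreover have "y \<in> {z \<in> P - {x}. f z \<in> ball (f y) e}"
      using y \<open>e > 0\<close> by simp
    ultimately obtain F r where "finite F" "F \<subseteq> K" "r > 0"
        "coordinate_ball y F r \<subseteq> {z \<in> P - {x}. f z \<in> ball (f y) e}"
      by (rule coordinate_ball_subset_openin)
    then show ?thesis
      by (intro exI[of _ F] exI[of _ r]) (auto simp: dist_real_def abs_minus_commute)
  qed
  then obtain E r where "\<forall>y\<in>P - {x}. finite (E y) \<and> E y \<subseteq> K \<and> r y > 0 \<and>
      (\<forall>z\<in>coordinate_ball y (E y) (r y) - {x}. \<bar>f z - f y\<bar> < e)"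
    by metis
  then show thesis
    using that unfolding coordinate_modulus_def by blast
qed

lemma coordinate_retraction_estimate:
  assumes x: "x \<in> P" and C: "C \<subseteq> K" "c \<in> K - C"
    and modulus: "coordinate_modulus x f e E r"
    and F: "E (toggle x c) \<inter> C \<subseteq> F" "\<delta> \<le> r (toggle x c)"
    and y: "y \<in> coordinate_ball x F \<delta> - {x}" "E y \<subseteq> C"
  shows "\<bar>f y - f (toggle x c)\<bar> < 2 * e"
proof -
  define q where "q = toggle x c"
  \<comment> \<open>\<open>u\<close> lies in the neighbourhoods controlling \<open>f\<close> at \<open>y\<close> (as \<open>E y \<subseteq> C\<close>) and at \<open>q\<close>.\<close>
  define u where "u k = (if k \<in> C then y k else q k)" for k
  have q: "q \<in> P - {x}"
    using toggle_in_P[OF x] C(2) toggle_neq[of x c] by (auto simp: q_def)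
  have yP: "y \<in> P - {x}"
    using y(1) by (auto simp: coordinate_ball_def)
  have "u \<in> P"
    using yP q C(1) by (auto simp: u_def PiE_iff extensional_def)
  moreover have "u c \<noteq> x c"
    using C(2) toggle_same_neq[of x c] by (auto simp: u_def q_def)
  ultimately have u: "u \<in> P - {x}"
    by auto
  have "u \<in> coordinate_ball y (E y) (r y)"
    using u y(2) modulus yP by (auto simp: coordinate_ball_def coordinate_modulus_def u_def)
  then have close_y: "\<bar>f u - f y\<bar> < e"
    using modulus yP u unfolding coordinate_modulus_def by blast
  have "\<bar>u k - q k\<bar> < r q" if "k \<in> E q" for k
  proof (cases "k \<in> C")
    case True
    then have "k \<in> F" "k \<noteq> c"
      using that F(1) C(2) by (auto simp: q_def)
    then show ?thesis
      using True y(1) F(2) by (auto simp: u_def q_def coordinate_ball_def)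
  next
    case False
    then show ?thesis
      using modulus q by (simp add: u_def coordinate_modulus_def)
  qed
  then have "u \<in> coordinate_ball q (E q) (r q)"
    using u by (simp add: coordinate_ball_def)
  then have close_q: "\<bar>f u - f q\<bar> < e"
    using modulus q u unfolding coordinate_modulus_def by blast
  from close_y close_q show ?thesis
    by (simp add: q_def)
qed

lemma close_pair_exists:
  assumes x: "x \<in> P" and modulus: "coordinate_modulus x f e E r"
    and pairs: "\<And>F \<delta>. finite F \<Longrightarrow> F \<subseteq> K \<Longrightarrow> \<delta> > 0 \<Longrightarrow>
      y F \<delta> \<in> coordinate_ball x F \<delta> - {x} \<and> y' F \<delta> \<in> coordinate_ball x F \<delta> - {x}"
  obtains F \<delta> where "finite F" "F \<subseteq> K" "\<delta> > 0" "\<bar>f (y F \<delta>) - f (y' F \<delta>)\<bar> < 4 * e"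
proof -
  have closure_step: "finite (E (y A (1 / Suc n)) \<union> E (y' A (1 / Suc n))) \<and>
      E (y A (1 / Suc n)) \<union> E (y' A (1 / Suc n)) \<subseteq> K" if "finite A" "A \<subseteq> K" for n A
  proof -
    have "y A (1 / Suc n) \<in> P - {x}" "y' A (1 / Suc n) \<in> P - {x}"
      using pairs[OF that] by (auto simp: coordinate_ball_def)
    then show ?thesis
      using modulus by (auto simp: coordinate_modulus_def)
  qed
  obtain B where B: "mono B" "\<And>n. finite (B n) \<and> B n \<subseteq> K"
    "\<And>n. E (y (B n) (1 / Suc n)) \<union> E (y' (B n) (1 / Suc n)) \<subseteq> B (Suc n)"
    using increasing_closure_sequence[of K "\<lambda>n A. E (y A (1 / Suc n)) \<union> E (y' A (1 / Suc n))",
          OF closure_step] by blast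
  \<comment> \<open>\<open>C\<close> contains the coordinates controlling \<open>f\<close> at all the chosen pairs.\<close>
  define C where "C = (\<Union>n. B n)"
  have "C \<subseteq> K"
    using B(2) by (auto simp: C_def)
  have "countable C"
    unfolding C_def using B(2) by (intro countable_UN) (auto intro: countable_finite)
  then have "K - C \<noteq> {}"
    using uncountable_diff_countable countable_empty by metis
  then obtain c where c: "c \<in> K - C"
    by blast
  define q where "q = toggle x c"
  have "q \<in> P - {x}"
    using toggle_in_P[OF x] c toggle_neq[of x c] by (auto simp: q_def)
  then have "finite (E q)" "r q > 0"
    using modulus by (auto simp: coordinate_modulus_def)
  then obtain N where N: "E q \<inter> C \<subseteq> B N"
    using finite_subset_Union_mono[OF B(1), of "E q \<inter> C"] by (auto simp: C_def)
  obtain m where m: "inverse (real (Suc m)) < r q"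
    using reals_Archimedean[OF \<open>r q > 0\<close>] by blast
  define n where "n = max N m"
  define \<delta> where "\<delta> = 1 / real (Suc n)"
  have "1 / real (Suc n) \<le> 1 / real (Suc m)"
    by (intro frac_le) (auto simp: n_def)
  then have "\<delta> > 0" "\<delta> \<le> r q"
    using m by (simp_all add: \<delta>_def inverse_eq_divide)
  have "E q \<inter> C \<subseteq> B n"
    using N monoD[OF B(1), of N n] by (auto simp: n_def)
  moreover have "E (y (B n) \<delta>) \<subseteq> C" "E (y' (B n) \<delta>) \<subseteq> C"
    using B(3)[of n] by (auto simp: C_def \<delta>_def)
  ultimately have "\<bar>f (y (B n) \<delta>) - f q\<bar> < 2 * e" "\<bar>f (y' (B n) \<delta>) - f q\<bar> < 2 * e"
    using coordinate_retraction_estimate[OF x \<open>C \<subseteq> K\<close> c modulus] pairs[OF _ _ \<open>\<delta> > 0\<close>, of "B n"] B(2)[of n]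
      \<open>\<delta> \<le> r q\<close> unfolding q_def by blast+
  then show thesis
    using that[of "B n" \<delta>] B(2)[of n] \<open>\<delta> > 0\<close> by linarith
qed

lemma Cauchy_at_deleted_point_cube:
  assumes x: "x \<in> P"
  shows "Cauchy_at_deleted_point cube x"
  unfolding Cauchy_at_deleted_point_def
proof (intro allI impI)
  fix f :: "('k \<Rightarrow> real) \<Rightarrow> real" and e :: real
  assume "continuous_map (deleted_card cube x) euclideanreal f \<and> e > 0"
  then obtain E r where modulus: "coordinate_modulus x f (e / 4) E r"
    using coordinate_modulus_exists[of x f "e / 4"] by auto
  show "\<exists>W. openin cube W \<and> x \<in> W \<and> (\<forall>y\<in>W - {x}. \<forall>y'\<in>W - {x}. \<bar>f y - f y'\<bar> \<le> e)"
  proof (rule ccontr)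
    assume far: "\<not> ?thesis"
    have "\<exists>y y'. y \<in> coordinate_ball x F \<delta> - {x} \<and> y' \<in> coordinate_ball x F \<delta> - {x} \<and> e < \<bar>f y - f y'\<bar>"
      if "finite F" "F \<subseteq> K" "\<delta> > 0" for F \<delta>
    proof -
      have "openin cube (coordinate_ball x F \<delta>)" "x \<in> coordinate_ball x F \<delta>"
        using openin_coordinate_ball[OF that(1,2)] that(3) x by (auto simp: coordinate_ball_def)
      then show ?thesis
        using far by (meson not_le)
    qed
    then obtain y y' where pairs: "\<And>F \<delta>. finite F \<Longrightarrow> F \<subseteq> K \<Longrightarrow> \<delta> > 0 \<Longrightarrow>
        y F \<delta> \<in> coordinate_ball x F \<delta> - {x} \<and> y' F \<delta> \<in> coordinate_ball x F \<delta> - {x} \<and>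
        e < \<bar>f (y F \<delta>) - f (y' F \<delta>)\<bar>"
      by metis
    obtain F \<delta> where "finite F" "F \<subseteq> K" "\<delta> > 0" "\<bar>f (y F \<delta>) - f (y' F \<delta>)\<bar> < 4 * (e / 4)"
      using close_pair_exists[OF x modulus, of y y'] pairs by blast
    then show False
      using pairs[of F \<delta>] by simp
  qed
qed

lemma exists_coordinate_neq: "y \<in> P \<Longrightarrow> x \<in> P \<Longrightarrow> y \<noteq> x \<Longrightarrow> \<exists>k\<in>K. y k \<noteq> x k"
  using PiE_ext by metis

lemma openin_deleted_card_coordinate_neq:
  assumes "k \<in> K"
  shows "openin (deleted_card cube x) {y \<in> P - {x}. y k \<noteq> x k}"
proof -
  have "continuous_map (deleted_card cube x) euclideanreal (\<lambda>y. y k)"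
    unfolding deleted_card_def by (rule continuous_map_from_subtopology[OF continuous_map_coordinate[OF assms]])
  then have "openin (deleted_card cube x) {y \<in> topspace (deleted_card cube x). y k \<in> - {x k}}"
    by (rule openin_continuous_map_preimage) (simp add: open_Compl)
  moreover have "{y \<in> topspace (deleted_card cube x). y k \<in> - {x k}} = {y \<in> P - {x}. y k \<noteq> x k}"
    by auto
  ultimately show ?thesis
    by simp
qed

definition agreement_set :: "('k \<Rightarrow> real) \<Rightarrow> 'k set \<Rightarrow> ('k \<Rightarrow> real) set" where
  "agreement_set x B = {y \<in> P - {x}. \<forall>k\<in>B. y k = x k}"

lemma closedin_agreement_set:
  assumes "B \<subseteq> K"
  shows "closedin (deleted_card cube x) (agreement_set x B)"
proof -
  have "openin cube {y \<in> P. y k \<in> - {x k}}" if "k \<in> B" for k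
    using openin_continuous_map_preimage[OF continuous_map_coordinate, of k "- {x k}"] that assms by auto
  then have "openin cube (\<Union>k\<in>B. {y \<in> P. y k \<in> - {x k}})"
    by blast
  then have "closedin cube (topspace cube - (\<Union>k\<in>B. {y \<in> P. y k \<in> - {x k}}))"
    by (rule closedin_diff[OF closedin_topspace])
  moreover have "agreement_set x B = (topspace cube - (\<Union>k\<in>B. {y \<in> P. y k \<in> - {x k}})) \<inter> (P - {x})"
    by (auto simp: agreement_set_def)
  ultimately show ?thesis
    unfolding deleted_card_def closedin_subtopology by auto
qed

lemma in_closure_of_agreement_set:
  assumes x: "x \<in> P" and "B \<subseteq> K" "infinite (K - B)"
  shows "x \<in> cube closure_of (agreement_set x B)"
proof -
  have "toggle x c \<in> agreement_set x B" if c: "c \<in> K - B" for c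
  proof -
    have "\<forall>k\<in>B. toggle x c k = x k"
      using c by (auto simp: toggle_def)
    then show ?thesis
      using toggle_in_P[OF x] c toggle_neq[of x c] by (simp add: agreement_set_def)
  qed
  then have "toggle x ` (K - B) \<subseteq> agreement_set x B"
    by (simp add: image_subset_iff)
  then show ?thesis
    by (rule subsetD[OF closure_of_mono in_closure_of_toggles[OF x assms(3) Diff_subset]])
qed

lemma disjnt_agreement_sets:
  assumes x: "x \<in> P"
  shows "disjnt (agreement_set x B) (agreement_set x (K - B))"
  unfolding disjnt_def
proof (intro equals0I)
  fix y assume y: "y \<in> agreement_set x B \<inter> agreement_set x (K - B)"
  then have "y \<in> P" "y \<noteq> x"
    by (auto simp: agreement_set_def)
  then obtain k where "k \<in> K" "y k \<noteq> x k"
    using exists_coordinate_neq[OF _ x] by blast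
  with y show False
    by (cases "k \<in> B") (auto simp: agreement_set_def)
qed

lemma not_compact_deleted_card: "x \<in> P \<Longrightarrow> \<not> compact_space (deleted_card cube x)"
  using not_compact_space_deleted_card[OF Hausdorff_cube _ not_openin_singleton] by simp

lemma not_Lindelof_deleted_card:
  assumes x: "x \<in> P"
  shows "\<not> Lindelof_space (deleted_card cube x)"
proof
  assume "Lindelof_space (deleted_card cube x)"
  define U where "U k = {y \<in> P - {x}. y k \<noteq> x k}" for k
  have "\<Union>(U ` K) = topspace (deleted_card cube x)"
    using exists_coordinate_neq[OF _ x] by (auto simp: U_def)
  moreover have "\<forall>V\<in>U ` K. openin (deleted_card cube x) V"
    using openin_deleted_card_coordinate_neq by (auto simp: U_def)
  ultimately obtain \<V> where "countable \<V>" "\<V> \<subseteq> U ` K" "\<Union>\<V> = topspace (deleted_card cube x)"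
    using \<open>Lindelof_space (deleted_card cube x)\<close> unfolding Lindelof_space_def by meson
  then obtain D where D: "countable D" "D \<subseteq> K" "\<Union>(U ` D) = P - {x}"
    using countable_subset_image[of \<V> U K] by auto
  have "K - D \<noteq> {}"
    using uncountable_diff_countable[OF \<open>countable D\<close>] countable_empty by metis
  then obtain c where c: "c \<in> K" "c \<notin> D"
    by blast
  have "toggle x c \<in> P - {x}"
    using toggle_in_P[OF x c(1)] toggle_neq[of x c] by simp
  then obtain d where "d \<in> D" "toggle x c \<in> U d"
    using D(3) by blast
  then have "d \<noteq> c" "toggle x c d \<noteq> x d"
    using c(2) by (auto simp: U_def)
  then show False
    by simp
qed

lemma not_normal_deleted_card:
  assumes x: "x \<in> P"
  shows "\<not> normal_space (deleted_card cube x)"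
proof -
  obtain A where A: "A \<subseteq> K" "countable A" "infinite A"
    using infinite_countable_subset'[OF infinite_K] by blast
  have "infinite (K - A)"
    using uncountable_diff_countable[OF A(2)] uncountable_infinite by blast
  moreover have "K - (K - A) = A"
    using A(1) by blast
  ultimately show ?thesis
    using not_normal_space_deleted_card[OF Cauchy_at_deleted_point_cube[OF x]
        closedin_agreement_set[OF A(1)] closedin_agreement_set[OF Diff_subset] disjnt_agreement_sets[OF x]
        in_closure_of_agreement_set[OF x A(1)] in_closure_of_agreement_set[OF x Diff_subset]] A(3)
    by simp
qed

lemma not_paracompact_deleted_card:
  assumes "x \<in> P"
  shows "\<not> paracompact_space (deleted_card cube x)"
proof
  assume "paracompact_space (deleted_card cube x)"
  moreover have "regular_space (deleted_card cube x)"
    unfolding deleted_card_def by (rule regular_space_subtopology[OF regular_cube])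
  ultimately show False
    using paracompact_regular_imp_normal_space not_normal_deleted_card[OF assms] by blast
qed

lemma Hausdorff_locally_compact_dense_deleted_card:
  assumes "compact S"
  shows "Hausdorff_space (deleted_card cube x) \<and> locally_compact_space (deleted_card cube x) \<and>
    dense_in_itself (deleted_card cube x)"
proof (intro conjI)
  show "Hausdorff_space (deleted_card cube x)"
    unfolding deleted_card_def by (rule Hausdorff_space_subtopology[OF Hausdorff_cube])
  have "compact_space cube"
    using compact_cube[OF assms] .
  moreover have "openin cube (topspace cube - {x})"
    using open_in_Hausdorff_delete[OF Hausdorff_cube openin_topspace] .
  ultimately show "locally_compact_space (deleted_card cube x)"
    unfolding deleted_card_def
    using locally_compact_space_open_subset[OF disjI1[OF Hausdorff_cube] compact_imp_locally_compact_space]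
    by blast
qed (rule dense_in_itself_deleted_card)

lemma reconstructible:
  assumes "compact S" and deck: "same_deck Z cube"
  shows "Z homeomorphic_space cube"
proof -
  have deck_Z: "\<forall>z\<in>topspace Z. \<exists>x\<in>P. deleted_card Z z homeomorphic_space deleted_card cube x"
    and deck_cube: "\<forall>x\<in>P. \<exists>z\<in>topspace Z. deleted_card cube x homeomorphic_space deleted_card Z z"
    using deck unfolding same_deck_def by simp_all
  have Z_cards: "Hausdorff_space (deleted_card Z z) \<and> locally_compact_space (deleted_card Z z) \<and>
      dense_in_itself (deleted_card Z z)" if z: "z \<in> topspace Z" for z
  proof -
    obtain x where hom: "deleted_card Z z homeomorphic_space deleted_card cube x"
      using bspec[OF deck_Z z] by blast
    then show ?thesis
      using Hausdorff_locally_compact_dense_deleted_card[OF assms(1), of x] homeomorphic_Hausdorff_space[OF hom]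
        homeomorphic_locally_compact_space[OF hom] homeomorphic_dense_in_itself[OF hom] by blast
  qed
  define x0 where "x0 = (\<lambda>k\<in>K. 0 :: real)"
  have x0: "x0 \<in> P"
    using zero_in_S by (simp add: x0_def restrict_PiE_iff)
  then obtain z0 where z0: "z0 \<in> topspace Z" "deleted_card cube x0 homeomorphic_space deleted_card Z z0"
    using deck_cube by blast
  obtain c where "c \<in> K"
    using infinite_imp_nonempty[OF infinite_K] by blast
  then have "toggle x0 c \<in> topspace (deleted_card cube x0)"
    using toggle_in_P[OF x0] toggle_neq[of x0 c] by simp
  then have "topspace (deleted_card Z z0) \<noteq> {}"
    by (metis null_topspace_iff_trivial homeomorphic_empty_space[OF z0(2)] empty_iff)
  then have "infinite (topspace (deleted_card Z z0))"
    using infinite_topspace_if_dense_in_itself Z_cards[OF z0(1)] by blast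
  then have "infinite (topspace Z)"
    using finite_Diff[of "topspace Z" "{z0}"] by auto
  then have Z: "Hausdorff_space Z" "locally_compact_space Z" "\<not> openin Z {z0}"
    using Hausdorff_locally_compact_dense_if_deleted_cards[of Z] Z_cards z0(1)
    unfolding dense_in_itself_def by blast+
  have "compact_space cube"
    using compact_cube[OF assms(1)] .
  moreover have "x0 \<in> topspace cube"
    using x0 by simp
  ultimately have "cube homeomorphic_space Z"
    using homeomorphic_space_if_deleted_cards_homeomorphic[OF _ Hausdorff_cube _
          Cauchy_at_deleted_point_cube[OF x0] Z(2,1) z0(1) Z(3) z0(2)]
    by blast
  then show ?thesis
    by (rule homeomorphic_space_sym[THEN iffD1])
qed

end

lemma discrete_topology_zero_one: "discrete_topology {0, 1 :: real} = top_of_set {0, 1}"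
  using finite_t1_space_imp_discrete_topology[of "top_of_set {0, 1 :: real}" "{0, 1}"]
  by (simp add: t1_space_subtopology t1_space_euclidean)

theorem mainTheorem1:
  fixes K :: "'k set" and X :: "('k \<Rightarrow> real) topology" and Z :: "'b topology"
  assumes "uncountable K"
    and "X = product_topology (\<lambda>_. discrete_topology {0, 1}) K \<or>
         X = product_topology (\<lambda>_. top_of_set {0..1}) K"
  shows "(is_reconstruction Z X \<longrightarrow> Z homeomorphic_space X) \<and>
         (\<forall>x\<in>topspace X. \<not> compact_space (deleted_card X x) \<and> \<not> paracompact_space (deleted_card X x) \<and>
            \<not> Lindelof_space (deleted_card X x) \<and> \<not> normal_space (deleted_card X x))"
proof -
  obtain S :: "real set" where S: "0 \<in> S" "1 \<in> S" "compact S"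
    and X: "X = product_topology (\<lambda>_. top_of_set S) K"
  proof (cases "X = product_topology (\<lambda>_. discrete_topology {0, 1}) K")
    case True
    then show ?thesis
      using that[of "{0, 1}"] by (simp add: discrete_topology_zero_one)
  next
    case False
    then show ?thesis
      using that[of "{0..1}"] assms(2) by simp
  qed
  interpret uncountable_power S K
    using S(1,2) assms(1) by unfold_locales
  show ?thesis
    unfolding X is_reconstruction_def
  proof (intro conjI impI ballI)
    show "same_deck Z cube \<Longrightarrow> Z homeomorphic_space cube"
      by (rule reconstructible[OF S(3)])
    fix x assume "x \<in> topspace cube"
    then have "x \<in> P"
      by simp
    then show "\<not> compact_space (deleted_card cube x)" "\<not> paracompact_space (deleted_card cube x)"
      "\<not> Lindelof_space (deleted_card cube x)" "\<not> normal_space (deleted_card cube x)"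
      by (rule not_compact_deleted_card not_paracompact_deleted_card not_Lindelof_deleted_card
          not_normal_deleted_card)+
  qed
qed

end
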